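(* Suppose $F$ is symmetric ($F(-i)=1-F(i)$ for all $i$) and fix $R\in(0,1)$. (i) If the receiver obtains only buy recommendations (resp. only don't-buy recommendations), then as their number tends to infinity the posterior probability of $(1,1)$ (resp. $(0,0)$) converges to $1$: $\lim_{b\to\infty}p_H(b,0)=1$ and $\lim_{d\to\infty}p_L(0,d)=1$. (ii) If the receiver obtains mixed recommendations, then for all $b,d>0$, $p_1(b,d)/p_2(b,d)=q_1/q_2$ and $p_H(b,d)=p_L(b,d)=0$.
   Context: Setting. Consumer types are $i\in[-1/2,1/2]$, distributed according to a continuous cumulative distribution function $F$ with full support on $[-1/2,1/2]$. A product has a quality vector $(Q_1,Q_2)\in\{0,1\}^2$; a type-$i$ consumer gets payoff $(1/2+i)Q_1+(1/2-i)Q_2$. The versions $(1,1),(1,0),(0,1),(0,0)$ have prior probabilities $q_H,q_1,q_2,q_L$, all strictly positive and summing to $1$. Given a threshold $R\in(0,1)$, each sender, with type drawn from $F$ independently of the product and of the other senders, gives a buy recommendation if her payoff from the product is at least $R$ and a don't-buy recommendation otherwise. Let $\phi_1(R)=1-F(R-1/2)$, $\phi_2(R)=F(1/2-R)$. After observing $b$ buy and $d$ don't-buy recommendations ($b+d>0$), the receiver's Bayesian posterior $(p_H(b,d),p_1(b,d),p_2(b,d),p_L(b,d))$ over $(1,1),(1,0),(0,1),(0,0)$ is proportional to $(q_H\mathbf 1[d=0],\ q_1\phi_1(R)^b(1-\phi_1(R))^d,\ q_2\phi_2(R)^b(1-\phi_2(R))^d,\ q_L\mathbf 1[b=0])$.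 *)

theory Defs
  imports Complex_Main
begin

definition cont_cdf_full_support :: "(real \<Rightarrow> real) \<Rightarrow> bool" where
  "cont_cdf_full_support F \<longleftrightarrow>
     continuous_on UNIV F \<and>
     (\<forall>x. x \<le> -1/2 \<longrightarrow> F x = 0) \<and>
     (\<forall>x. x \<ge> 1/2 \<longrightarrow> F x = 1) \<and>
     mono F \<and>
     strict_mono_on {-1/2..1/2} F"

definition phi1 :: "(real \<Rightarrow> real) \<Rightarrow> real \<Rightarrow> real" where
  "phi1 F R = 1 - F (R - 1/2)"

definition phi2 :: "(real \<Rightarrow> real) \<Rightarrow> real \<Rightarrow> real" where
  "phi2 F R = F (1/2 - R)"

text \<open>Unnormalized posterior weights of versions (1,1),(1,0),(0,1),(0,0).\<close>
definition wH :: "real \<Rightarrow> nat \<Rightarrow> nat \<Rightarrow> real" where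
  "wH qH b d = (if d = 0 then qH else 0)"
definition w1 :: "(real \<Rightarrow> real) \<Rightarrow> real \<Rightarrow> real \<Rightarrow> nat \<Rightarrow> nat \<Rightarrow> real" where
  "w1 F R q1 b d = q1 * phi1 F R ^ b * (1 - phi1 F R) ^ d"
definition w2 :: "(real \<Rightarrow> real) \<Rightarrow> real \<Rightarrow> real \<Rightarrow> nat \<Rightarrow> nat \<Rightarrow> real" where
  "w2 F R q2 b d = q2 * phi2 F R ^ b * (1 - phi2 F R) ^ d"
definition wL :: "real \<Rightarrow> nat \<Rightarrow> nat \<Rightarrow> real" where
  "wL qL b d = (if b = 0 then qL else 0)"

definition wtot :: "(real \<Rightarrow> real) \<Rightarrow> real \<Rightarrow> real \<Rightarrow> real \<Rightarrow> real \<Rightarrow> real \<Rightarrow> nat \<Rightarrow> nat \<Rightarrow> real" where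
  "wtot F R qH q1 q2 qL b d = wH qH b d + w1 F R q1 b d + w2 F R q2 b d + wL qL b d"

definition pH where "pH F R qH q1 q2 qL b d = wH qH b d / wtot F R qH q1 q2 qL b d"
definition p1 where "p1 F R qH q1 q2 qL b d = w1 F R q1 b d / wtot F R qH q1 q2 qL b d"
definition p2 where "p2 F R qH q1 q2 qL b d = w2 F R q2 b d / wtot F R qH q1 q2 qL b d"
definition pL where "pL F R qH q1 q2 qL b d = wL qL b d / wtot F R qH q1 q2 qL b d"

end

theory Submission
  imports Defs
begin

text \<open>A sender recommends (1,0) iff her type is at least R - 1/2 and (0,1) iff it is at
  most 1/2 - R, so by symmetry of F both versions get a buy recommendation with the same
  probability \<open>phi1 = phi2\<close>, which full support puts strictly between 0 and 1. Mixed
  recommendations exclude (1,1) and (0,0), and equal likelihoods leave the prior odds of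
  (1,0) against (0,1) unchanged. Unanimous buy (don't-buy) recommendations have
  likelihood one under (1,1) (resp. (0,0)) and geometrically vanishing likelihood under
  (1,0) and (0,1).\<close>

lemma cdf_strictly_between_0_1:
  assumes "cont_cdf_full_support F" and "-1/2 < x" "x < 1/2"
  shows "0 < F x \<and> F x < 1"
proof -
  have F_ends: "F (-1/2) = 0" "F (1/2) = 1"
    and mono: "strict_mono_on {-1/2..1/2} F"
    using assms(1) unfolding cont_cdf_full_support_def by auto
  have "F (-1/2) < F x" "F x < F (1/2)"
    using strict_mono_onD[OF mono, of "-1/2" x] strict_mono_onD[OF mono, of x "1/2"] assms(2,3)
    by auto
  then show ?thesis using F_ends by simp
qed

lemma phi1_strictly_between_0_1:
  assumes "cont_cdf_full_support F" and "0 < R" "R < 1"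
  shows "0 < phi1 F R \<and> phi1 F R < 1"
  using cdf_strictly_between_0_1[OF assms(1), of "R - 1/2"] assms(2,3)
  by (simp add: phi1_def)

lemma phi2_strictly_between_0_1:
  assumes "cont_cdf_full_support F" and "0 < R" "R < 1"
  shows "0 < phi2 F R \<and> phi2 F R < 1"
  using cdf_strictly_between_0_1[OF assms(1), of "1/2 - R"] assms(2,3)
  by (simp add: phi2_def)

lemma phi1_eq_phi2_if_symmetric:
  assumes "\<And>i. F (- i) = 1 - F i"
  shows "phi1 F R = phi2 F R"
  using assms[of "R - 1/2"] by (simp add: phi1_def phi2_def)

lemma tendsto_div_add_geometric:
  fixes a c e x y :: real
  assumes "a \<noteq> 0" "\<bar>x\<bar> < 1" "\<bar>y\<bar> < 1"
  shows "(\<lambda>n. a / (a + c * x ^ n + e * y ^ n)) \<longlonglongrightarrow> 1"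
proof -
  have "(\<lambda>n. a / (a + c * x ^ n + e * y ^ n)) \<longlonglongrightarrow> a / (a + c * 0 + e * 0)"
    using assms by (intro tendsto_intros LIMSEQ_power_zero) auto
  then show ?thesis using assms(1) by simp
qed

lemma pH_buy_only:
  assumes "b > 0"
  shows "pH F R qH q1 q2 qL b 0 = qH / (qH + q1 * phi1 F R ^ b + q2 * phi2 F R ^ b)"
  using assms by (simp add: pH_def wtot_def wH_def w1_def w2_def wL_def)

lemma pL_dont_buy_only:
  assumes "d > 0"
  shows "pL F R qH q1 q2 qL 0 d
    = qL / (qL + q1 * (1 - phi1 F R) ^ d + q2 * (1 - phi2 F R) ^ d)"
  using assms by (simp add: pL_def wtot_def wH_def w1_def w2_def wL_def add_ac)

lemma pH_buy_only_tendsto_1: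
  assumes "qH \<noteq> 0" "\<bar>phi1 F R\<bar> < 1" "\<bar>phi2 F R\<bar> < 1"
  shows "(\<lambda>b. pH F R qH q1 q2 qL b 0) \<longlonglongrightarrow> 1"
proof (rule Lim_transform_eventually)
  show "(\<lambda>b. qH / (qH + q1 * phi1 F R ^ b + q2 * phi2 F R ^ b)) \<longlonglongrightarrow> 1"
    using assms by (rule tendsto_div_add_geometric)
  show "\<forall>\<^sub>F b in sequentially.
      qH / (qH + q1 * phi1 F R ^ b + q2 * phi2 F R ^ b) = pH F R qH q1 q2 qL b 0"
    using eventually_gt_at_top[of 0] by (rule eventually_mono) (simp add: pH_buy_only)
qed

lemma pL_dont_buy_only_tendsto_1:
  assumes "qL \<noteq> 0" "\<bar>1 - phi1 F R\<bar> < 1" "\<bar>1 - phi2 F R\<bar> < 1"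
  shows "(\<lambda>d. pL F R qH q1 q2 qL 0 d) \<longlonglongrightarrow> 1"
proof (rule Lim_transform_eventually)
  show "(\<lambda>d. qL / (qL + q1 * (1 - phi1 F R) ^ d + q2 * (1 - phi2 F R) ^ d)) \<longlonglongrightarrow> 1"
    using assms by (rule tendsto_div_add_geometric)
  show "\<forall>\<^sub>F d in sequentially.
      qL / (qL + q1 * (1 - phi1 F R) ^ d + q2 * (1 - phi2 F R) ^ d) = pL F R qH q1 q2 qL 0 d"
    using eventually_gt_at_top[of 0] by (rule eventually_mono) (simp add: pL_dont_buy_only)
qed

lemma pH_mixed: "d > 0 \<Longrightarrow> pH F R qH q1 q2 qL b d = 0"
  by (simp add: pH_def wH_def)

lemma pL_mixed: "b > 0 \<Longrightarrow> pL F R qH q1 q2 qL b d = 0"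
  by (simp add: pL_def wL_def)

lemma p1_div_p2_eq_w1_div_w2:
  assumes "wtot F R qH q1 q2 qL b d \<noteq> 0"
  shows "p1 F R qH q1 q2 qL b d / p2 F R qH q1 q2 qL b d = w1 F R q1 b d / w2 F R q2 b d"
  using assms by (simp add: p1_def p2_def)

lemma p1_div_p2_mixed:
  assumes "b > 0" "d > 0" and "phi1 F R = phi2 F R" and "0 < phi1 F R" "phi1 F R < 1"
    and "q1 > 0" "q2 > 0"
  shows "p1 F R qH q1 q2 qL b d / p2 F R qH q1 q2 qL b d = q1 / q2"
proof -
  define t where "t = phi1 F R ^ b * (1 - phi1 F R) ^ d"
  have "t > 0" using assms(4,5) by (simp add: t_def)
  have w: "w1 F R q1 b d = q1 * t" "w2 F R q2 b d = q2 * t"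
    using assms(3) by (simp_all add: w1_def w2_def t_def)
  have "wtot F R qH q1 q2 qL b d = (q1 + q2) * t"
    using assms(1,2) w by (simp add: wtot_def wH_def wL_def algebra_simps)
  then have "wtot F R qH q1 q2 qL b d \<noteq> 0" using \<open>t > 0\<close> assms(6,7) by simp
  then show ?thesis using \<open>t > 0\<close> by (simp add: p1_div_p2_eq_w1_div_w2 w)
qed

theorem lemma3:
  fixes F :: "real \<Rightarrow> real" and R qH q1 q2 qL :: real
  assumes cdf: "cont_cdf_full_support F"
    and sym: "\<And>i. F (- i) = 1 - F i"
    and R: "0 < R" "R < 1"
    and q_pos: "qH > 0" "q1 > 0" "q2 > 0" "qL > 0"
    and q_sum: "qH + q1 + q2 + qL = 1"
  shows "((\<lambda>b. pH F R qH q1 q2 qL b 0) \<longlonglongrightarrow> 1)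
    \<and> ((\<lambda>d. pL F R qH q1 q2 qL 0 d) \<longlonglongrightarrow> 1)
    \<and> (\<forall>b d. b > 0 \<and> d > 0 \<longrightarrow>
           p1 F R qH q1 q2 qL b d / p2 F R qH q1 q2 qL b d = q1 / q2
         \<and> pH F R qH q1 q2 qL b d = 0 \<and> pL F R qH q1 q2 qL b d = 0)"
proof -
  have phi1: "0 < phi1 F R" "phi1 F R < 1"
    using phi1_strictly_between_0_1[OF cdf R] by auto
  have phi2: "0 < phi2 F R" "phi2 F R < 1"
    using phi2_strictly_between_0_1[OF cdf R] by auto
  have buy: "(\<lambda>b. pH F R qH q1 q2 qL b 0) \<longlonglongrightarrow> 1"
    using q_pos phi1 phi2 by (intro pH_buy_only_tendsto_1) auto
  have dont_buy: "(\<lambda>d. pL F R qH q1 q2 qL 0 d) \<longlonglongrightarrow> 1"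
    using q_pos phi1 phi2 by (intro pL_dont_buy_only_tendsto_1) auto
  have phi_eq: "phi1 F R = phi2 F R"
    using sym by (rule phi1_eq_phi2_if_symmetric)
  have "p1 F R qH q1 q2 qL b d / p2 F R qH q1 q2 qL b d = q1 / q2" if "b > 0" "d > 0" for b d
    using that phi_eq phi1 q_pos(2,3) by (rule p1_div_p2_mixed)
  with buy dont_buy show ?thesis by (simp add: pH_mixed pL_mixed)
qed

end
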